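(* Let $m\ge 1$ and let $\{S_n\}$ be a $G(m,\mathbf{p})$ game, i.e. a $\bmod m$ random walk with parameters $p_0,\dots,p_{m-1}\in(0,1)$ and $q_j=1-p_j$. Let $\mathbb{C}$ be the $m\times m$ transition matrix of the walk's congruence classes modulo $m$, and for $i=1,\dots,m$ let $\gamma_{im}$ be the $(i,i)$-th cofactor of $\mathbb{I}-\mathbb{C}$, with $\gamma_{\cdot m}=\gamma_{1m}+\cdots+\gamma_{mm}$. Then, with probability one, \[ \lim_{n\to\infty}\frac{S_n}{n}=\frac{1}{\gamma_{\cdot m}}\sum_{i=1}^m\gamma_{im}\,(p_{i-1}-q_{i-1}). \]
   Context: A $\bmod m$ random walk $G(m,\mathbf{p})$ is a Markov chain on $\mathbb{Z}$ with $S_{n+1}-S_n\in\{-1,+1\}$, $P(S_{n+1}-S_n=1\mid S_n=j)=p_j$, $P(S_{n+1}-S_n=-1\mid S_n=j)=q_j=1-p_j$, where $p_j=p_{j+m}$ for all $j\in\mathbb{Z}$. The matrix $\mathbb{C}$ has rows and columns indexed by $1,\dots,m$, index $i$ corresponding to the residue class $i-1 \bmod m$, and $\mathbb{C}_{ij}=P(S_{n+1}\equiv j-1 \pmod m\mid S_n\equiv i-1\pmod m)$; for $m\ge3$ its only nonzero entries are $\mathbb{C}_{i,i+1}=p_{i-1}$ and $\mathbb{C}_{i,i-1}=q_{i-1}$ (indices taken cyclically mod $m$). The $(i,i)$ cofactor is the determinant of $\mathbb{I}-\mathbb{C}$ with row $i$ and column $i$ deleted (equal to $1$ when $m=1$).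 *)

theory Defs
  imports "HOL-Probability.Probability" "Jordan_Normal_Form.Determinant"
begin

text \<open>Transition matrix C of the residue classes mod m, 0-indexed:
  row/column index i (0 \<le> i < m) corresponds to the residue class i mod m
  (the paper's index i+1).  Entry (i,j) is P(S_{n+1} = j mod m | S_n = i mod m),
  i.e. p_i if j = i+1 mod m plus q_i = 1 - p_i if j = i-1 mod m
  (for m = 1 and m = 2 the two contributions add up).\<close>
definition modm_matrix :: "nat \<Rightarrow> (nat \<Rightarrow> real) \<Rightarrow> real mat" where
  "modm_matrix m p = mat m m (\<lambda>(i, j).
      (if j = (i + 1) mod m then p i else 0) +
      (if j = (i + m - 1) mod m then 1 - p i else 0))"

text \<open>gamma_{(i+1) m}: the (i,i) cofactor of I - C (0-indexed i); equals 1 when m = 1.\<close>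
definition gamma :: "nat \<Rightarrow> (nat \<Rightarrow> real) \<Rightarrow> nat \<Rightarrow> real" where
  "gamma m p i = cofactor (1\<^sub>m m - modm_matrix m p) i i"

text \<open>S is a mod m random walk G(m,p) on the probability space M: a Markov chain on
  the integers with steps +1 / -1, where from state s the step +1 has probability
  p_(s mod m) and the step -1 has probability q_(s mod m) = 1 - p_(s mod m)
  (conditioned on the whole past; stated multiplicatively, so null conditioning
  events impose nothing).  The initial distribution is arbitrary.\<close>
definition mod_walk :: "'a measure \<Rightarrow> nat \<Rightarrow> (nat \<Rightarrow> real) \<Rightarrow> (nat \<Rightarrow> 'a \<Rightarrow> int) \<Rightarrow> bool" where
  "mod_walk M m p S \<longleftrightarrow>
     prob_space M \<and>
     (\<forall>n. S n \<in> measurable M (count_space UNIV)) \<and>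
     (\<forall>n. AE \<omega> in M. S (Suc n) \<omega> - S n \<omega> \<in> {-1, 1}) \<and>
     (\<forall>n (s :: nat \<Rightarrow> int).
        measure M {\<omega> \<in> space M. (\<forall>k\<le>n. S k \<omega> = s k) \<and> S (Suc n) \<omega> = s n + 1}
          = p (nat (s n mod int m)) * measure M {\<omega> \<in> space M. \<forall>k\<le>n. S k \<omega> = s k} \<and>
        measure M {\<omega> \<in> space M. (\<forall>k\<le>n. S k \<omega> = s k) \<and> S (Suc n) \<omega> = s n - 1}
          = (1 - p (nat (s n mod int m))) * measure M {\<omega> \<in> space M. \<forall>k\<le>n. S k \<omega> = s k})"

end

(*
  Let C be the transition matrix of the residues S_n mod m, d_i = p_i - q_i the drift at
  residue i, and c the claimed limit.  By a maximum principle the kernel of I - C consists of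
  the constant vectors; hence every column of adj (I - C) is constant, so the diagonal
  cofactors gamma_i form a left null vector of I - C, and a homotopy to the identity shows
  that they are positive.  Thus gamma is an unnormalised stationary distribution, c is the
  gamma-average of d, and the Poisson equation (I - C) h = d - c has a solution h.
  With phi x = x + h (x mod m), the process phi (S_n) - n c is a martingale with bounded
  increments, so by the fourth-moment method (phi (S_n) - n c) / n tends to 0 almost surely;
  since h is bounded, S_n / n tends to c.
*)

theory Submission
  imports Defs
begin

lemma mult_mat_vec_index_sum:
  "A \<in> carrier_mat n n \<Longrightarrow> v \<in> carrier_vec n \<Longrightarrow> a < n \<Longrightarrow>
    vec_index (A *\<^sub>v v) a = (\<Sum>b<n. A $$ (a, b) * vec_index v b)"
  by (auto simp: scalar_prod_def row_def atLeast0LessThan intro!: sum.cong)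

lemma mult_mat_index_sum:
  "A \<in> carrier_mat n n \<Longrightarrow> B \<in> carrier_mat n n \<Longrightarrow> a < n \<Longrightarrow> b < n \<Longrightarrow>
    (A * B) $$ (a, b) = (\<Sum>k<n. A $$ (a, k) * B $$ (k, b))"
  by (auto simp: scalar_prod_def row_def col_def atLeast0LessThan intro!: sum.cong)

lemma det_ne_0_if_kernel_trivial:
  fixes A :: "'a::idom mat"
  assumes A: "A \<in> carrier_mat n n"
    and ker: "\<And>v a. (\<And>a. a < n \<Longrightarrow> (\<Sum>b<n. A $$ (a, b) * v b) = 0) \<Longrightarrow> a < n \<Longrightarrow> v a = 0"
  shows "det A \<noteq> 0"
proof
  assume "det A = 0"
  then obtain w where w: "w \<in> carrier_vec n" "w \<noteq> 0\<^sub>v n" "A *\<^sub>v w = 0\<^sub>v n"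
    using det_0_iff_vec_prod_zero[OF A] by blast
  have "(\<Sum>b<n. A $$ (a, b) * vec_index w b) = 0" if "a < n" for a
    using w(3) mult_mat_vec_index_sum[OF A w(1) that] that by (metis index_zero_vec(1))
  then have "vec_index w a = 0" if "a < n" for a
    using ker[of "vec_index w"] that by blast
  then have "w = 0\<^sub>v n" using w(1) by (intro eq_vecI) auto
  with w(2) show False by simp
qed

lemma solvable_if_det_ne_0:
  fixes A :: "'a::field mat"
  assumes A: "A \<in> carrier_mat n n" and det: "det A \<noteq> 0"
  shows "\<exists>x. \<forall>a<n. (\<Sum>b<n. A $$ (a, b) * x b) = w a"
proof -
  define x where "x = (1 / det A) \<cdot>\<^sub>v (adj_mat A *\<^sub>v vec n w)"
  have x: "x \<in> carrier_vec n" unfolding x_def using adj_mat(1)[OF A] by simp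
  have "A *\<^sub>v x = (1 / det A) \<cdot>\<^sub>v ((A * adj_mat A) *\<^sub>v vec n w)"
    unfolding x_def using adj_mat(1)[OF A] A
    by (simp add: mult_mat_vec[OF A] assoc_mult_mat_vec[of A n n _ n])
  also have "\<dots> = vec n w"
    using adj_mat(2)[OF A] det by auto
  finally have Ax: "A *\<^sub>v x = vec n w" .
  show ?thesis
  proof (intro exI allI impI)
    fix a assume "a < n"
    then show "(\<Sum>b<n. A $$ (a, b) * vec_index x b) = w a"
      using mult_mat_vec_index_sum[OF A x \<open>a < n\<close>] Ax by simp
  qed
qed

definition next_mean :: "nat \<Rightarrow> (nat \<Rightarrow> real) \<Rightarrow> (nat \<Rightarrow> real) \<Rightarrow> nat \<Rightarrow> real" where
  "next_mean m p h a = p a * h ((a + 1) mod m) + (1 - p a) * h ((a + m - 1) mod m)"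

lemma modm_matrix_row_sum:
  assumes a: "a < m"
  shows "(\<Sum>b<m. modm_matrix m p $$ (a, b) * v b) = next_mean m p v a"
proof -
  have "modm_matrix m p $$ (a, b) * v b =
      (if b = (a + 1) mod m then p a * v b else 0) +
      (if b = (a + m - 1) mod m then (1 - p a) * v b else 0)" if "b < m" for b
    using a that by (simp add: modm_matrix_def distrib_right)
  then have "(\<Sum>b<m. modm_matrix m p $$ (a, b) * v b) =
      (\<Sum>b<m. if b = (a + 1) mod m then p a * v b else 0) +
      (\<Sum>b<m. if b = (a + m - 1) mod m then (1 - p a) * v b else 0)"
    by (simp add: sum.distrib)
  also have "\<dots> = next_mean m p v a"
    using a by (simp add: next_mean_def)
  finally show ?thesis .
qed

locale cyclic_chain =
  fixes m :: nat and p :: "nat \<Rightarrow> real"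
  assumes m_pos: "1 \<le> m" and p_bounds: "\<And>j. j < m \<Longrightarrow> 0 < p j \<and> p j < 1"
begin

abbreviation IC :: "real mat" where
  "IC \<equiv> 1\<^sub>m m - modm_matrix m p"

lemma IC_carrier: "IC \<in> carrier_mat m m"
  unfolding modm_matrix_def by auto

lemma IC_row_sum:
  assumes a: "a < m"
  shows "(\<Sum>b<m. IC $$ (a, b) * v b) = v a - next_mean m p v a"
proof -
  have "(\<Sum>b<m. IC $$ (a, b) * v b) =
      (\<Sum>b<m. (if a = b then v b else 0) - modm_matrix m p $$ (a, b) * v b)"
    using a by (intro sum.cong) (auto simp: modm_matrix_def left_diff_distrib)
  then show ?thesis
    using a by (simp add: sum_subtractf modm_matrix_row_sum)
qed

text \<open>Since every \<open>p j\<close> is positive, a maximum of \<open>h\<close> at which \<open>h\<close> is subharmonic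
  propagates to the right neighbour, and hence around the whole cycle.\<close>
lemma maximum_principle:
  fixes h :: "nat \<Rightarrow> real"
  assumes j0: "j0 < m" and max: "\<And>j. j < m \<Longrightarrow> h j \<le> h j0"
    and sub: "\<And>j. j < m \<Longrightarrow> h j = h j0 \<Longrightarrow> h j0 \<le> next_mean m p h j"
    and j: "j < m"
  shows "h j = h j0"
proof -
  have around: "h ((j0 + t) mod m) = h j0" for t
  proof (induction t)
    case 0
    then show ?case using j0 by simp
  next
    case (Suc t)
    define i where "i = (j0 + t) mod m"
    have i: "i < m" using m_pos unfolding i_def by simp
    have right: "(i + 1) mod m = (j0 + Suc t) mod m" unfolding i_def by (simp add: mod_Suc_eq)
    have "h ((i + m - 1) mod m) \<le> h j0" using max m_pos by simp
    then have "(1 - p i) * h ((i + m - 1) mod m) \<le> (1 - p i) * h j0"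
      using p_bounds[OF i] by (intro mult_left_mono) auto
    moreover have "h j0 \<le> next_mean m p h i"
      using sub[OF i] Suc.IH unfolding i_def by simp
    ultimately have "p i * h j0 \<le> p i * h ((i + 1) mod m)"
      unfolding next_mean_def by (simp add: algebra_simps)
    then have "h j0 \<le> h ((i + 1) mod m)" using p_bounds[OF i] by simp
    with max[of "(i + 1) mod m"] m_pos show ?case unfolding right by simp
  qed
  have "(j0 + (j + m - j0)) mod m = j" using j0 j by simp
  then show ?thesis using around[of "j + m - j0"] by simp
qed

lemma exists_max_index:
  fixes h :: "nat \<Rightarrow> real"
  obtains j0 where "j0 < m" "\<And>j. j < m \<Longrightarrow> h j \<le> h j0"
proof -
  have "Max (h ` {..<m}) \<in> h ` {..<m}"
    using m_pos by (intro Max_in) (auto simp: lessThan_empty_iff)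
  then obtain j0 where "j0 < m" "h j0 = Max (h ` {..<m})" by (metis imageE lessThan_iff)
  then show ?thesis using that[of j0] Max_ge[of "h ` {..<m}"] by auto
qed

lemma harmonic_imp_constant:
  assumes harmonic: "\<And>a. a < m \<Longrightarrow> next_mean m p v a = v a" and i: "i < m"
  shows "v i = v 0"
proof -
  obtain j0 where j0: "j0 < m" "\<And>j. j < m \<Longrightarrow> v j \<le> v j0" using exists_max_index[of v] by blast
  have "v j = v j0" if "j < m" for j
    using j0 harmonic that by (intro maximum_principle) auto
  then show ?thesis using i m_pos by simp
qed

lemma det_IC: "det IC = 0"
proof -
  let ?one = "vec m (\<lambda>_. 1) :: real vec"
  have "IC *\<^sub>v ?one = 0\<^sub>v m"
  proof (rule eq_vecI)
    fix a assume "a < dim_vec (0\<^sub>v m :: real vec)"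
    then have a: "a < m" by simp
    then have "vec_index (IC *\<^sub>v ?one) a = (\<Sum>b<m. IC $$ (a, b) * 1)"
      using mult_mat_vec_index_sum[OF IC_carrier, of ?one a] by simp
    also have "\<dots> = 0" using IC_row_sum[OF a, of "\<lambda>_. 1"] by (simp add: next_mean_def)
    finally show "vec_index (IC *\<^sub>v ?one) a = vec_index (0\<^sub>v m) a" using a by simp
  qed (simp add: modm_matrix_def)
  moreover have "?one \<noteq> 0\<^sub>v m"
    using m_pos by (metis One_nat_def index_vec index_zero_vec(1) le_simps(3) zero_neq_one)
  moreover have "?one \<in> carrier_vec m" by simp
  ultimately show ?thesis
    using det_0_iff_vec_prod_zero[OF IC_carrier] by blast
qed

text \<open>Column \<open>j\<close> of \<open>adj IC\<close>, i.e. \<open>cofactor IC j\<close>, lies in \<open>ker IC\<close> because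
  \<open>IC * adj IC = det IC \<cdot> 1 = 0\<close>, so it is constant.\<close>
lemma cofactor_IC_eq_gamma:
  assumes j: "j < m" and k: "k < m"
  shows "cofactor IC j k = gamma m p j"
proof -
  have "next_mean m p (cofactor IC j) a = cofactor IC j a" if a: "a < m" for a
  proof -
    have "(\<Sum>b<m. IC $$ (a, b) * cofactor IC j b) = (IC * adj_mat IC) $$ (a, j)"
      using mult_mat_index_sum[OF IC_carrier adj_mat(1)[OF IC_carrier] a j] j
      by (simp add: adj_mat_def modm_matrix_def)
    also have "\<dots> = 0" using adj_mat(2)[OF IC_carrier] det_IC a j by simp
    finally show ?thesis using IC_row_sum[OF a] by simp
  qed
  then have "cofactor IC j i = cofactor IC j 0" if "i < m" for i
    using that by (rule harmonic_imp_constant)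
  from this[OF k] this[OF j] show ?thesis unfolding gamma_def by simp
qed

lemma gamma_left_null:
  assumes b: "b < m"
  shows "(\<Sum>k<m. gamma m p k * IC $$ (k, b)) = 0"
proof -
  have m0: "0 < m" using m_pos by simp
  have "adj_mat IC $$ (0, k) = gamma m p k" if "k < m" for k
    using that m0 cofactor_IC_eq_gamma[OF that m0] by (simp add: adj_mat_def modm_matrix_def)
  then have "(\<Sum>k<m. gamma m p k * IC $$ (k, b)) = (adj_mat IC * IC) $$ (0, b)"
    using mult_mat_index_sum[OF adj_mat(1)[OF IC_carrier] IC_carrier m0 b] by simp
  also have "\<dots> = 0" using adj_mat(3)[OF IC_carrier] det_IC m0 b by simp
  finally show ?thesis .
qed

lemma gamma_weighted_next_mean:
  "(\<Sum>a<m. gamma m p a * next_mean m p v a) = (\<Sum>a<m. gamma m p a * v a)"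
proof -
  have "(\<Sum>a<m. gamma m p a * (v a - next_mean m p v a)) =
      (\<Sum>a<m. \<Sum>b<m. gamma m p a * IC $$ (a, b) * v b)"
    by (intro sum.cong refl) (simp add: IC_row_sum[symmetric] sum_distrib_left mult.assoc)
  also have "\<dots> = (\<Sum>b<m. (\<Sum>a<m. gamma m p a * IC $$ (a, b)) * v b)"
    by (subst sum.swap) (simp add: sum_distrib_right)
  also have "\<dots> = 0" by (simp add: gamma_left_null)
  finally show ?thesis by (simp add: right_diff_distrib sum_subtractf)
qed

text \<open>The chain damped by \<open>s\<close> and killed at \<open>i\<close>.  By the maximum principle its
  determinant does not vanish for \<open>0 \<le> s \<le> 1\<close>; it is \<open>1\<close> at \<open>s = 0\<close> and \<open>\<gamma>\<^sub>i\<close> at \<open>s = 1\<close>,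
  so \<open>\<gamma>\<^sub>i > 0\<close> by the intermediate value theorem.\<close>
definition killed_matrix :: "nat \<Rightarrow> real \<Rightarrow> real mat" where
  "killed_matrix i s = mat m m (\<lambda>(a, b).
     (if a = b then 1 else 0) - s * (if a = i then 0 else modm_matrix m p $$ (a, b)))"

lemma killed_matrix_carrier: "killed_matrix i s \<in> carrier_mat m m"
  unfolding killed_matrix_def by simp

lemma killed_matrix_row_sum:
  assumes a: "a < m"
  shows "(\<Sum>b<m. killed_matrix i s $$ (a, b) * v b) =
    v a - s * (if a = i then 0 else next_mean m p v a)"
proof -
  have "(\<Sum>b<m. killed_matrix i s $$ (a, b) * v b) =
      (\<Sum>b<m. (if a = b then v b else 0) -
        s * ((if a = i then 0 else modm_matrix m p $$ (a, b)) * v b))"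
    using a unfolding killed_matrix_def by (intro sum.cong) (auto simp: left_diff_distrib)
  then show ?thesis
    using a by (cases "a = i")
      (simp_all add: sum_subtractf modm_matrix_row_sum flip: sum_distrib_left)
qed

lemma killed_solution_nonpos:
  assumes i: "i < m" and s: "0 \<le> s" "s \<le> 1" and vi: "v i = 0"
    and va: "\<And>a. a < m \<Longrightarrow> a \<noteq> i \<Longrightarrow> v a = s * next_mean m p v a"
    and a: "a < m"
  shows "v a \<le> 0"
proof -
  obtain j0 where j0: "j0 < m" "\<And>j. j < m \<Longrightarrow> v j \<le> v j0"
    using exists_max_index[of v] by blast
  have "v j0 \<le> 0"
  proof (rule ccontr)
    assume pos: "\<not> v j0 \<le> 0"
    have "v j0 \<le> next_mean m p v j" if j: "j < m" and "v j = v j0" for j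
    proof -
      have "j \<noteq> i" using pos vi \<open>v j = v j0\<close> by auto
      then have "v j0 = s * next_mean m p v j" using va[OF j] \<open>v j = v j0\<close> by simp
      with pos s show ?thesis
        by (cases "next_mean m p v j < 0")
          (auto simp: mult_nonneg_nonpos mult_left_le_one_le)
    qed
    then have "v i = v j0" using i j0 by (intro maximum_principle) auto
    then show False using pos vi by simp
  qed
  then show ?thesis using j0 a by force
qed

lemma det_killed_matrix_ne_0:
  assumes i: "i < m" and s: "0 \<le> s" "s \<le> 1"
  shows "det (killed_matrix i s) \<noteq> 0"
proof (rule det_ne_0_if_kernel_trivial[OF killed_matrix_carrier])
  fix v a
  assume ker: "\<And>a. a < m \<Longrightarrow> (\<Sum>b<m. killed_matrix i s $$ (a, b) * v b) = 0" and a: "a < m"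
  have vi: "v i = 0" using ker[OF i] killed_matrix_row_sum[OF i] by simp
  have va: "v a = s * next_mean m p v a" if "a < m" "a \<noteq> i" for a
    using ker[of a] killed_matrix_row_sum[of a] that by simp
  have "v a \<le> 0" by (rule killed_solution_nonpos[OF i s vi va a])
  moreover have "- v a \<le> 0"
    by (rule killed_solution_nonpos[OF i s, of "\<lambda>a. - v a"])
      (use vi va a in \<open>auto simp: next_mean_def algebra_simps\<close>)
  ultimately show "v a = 0" by simp
qed

lemma det_killed_matrix_0: "det (killed_matrix i 0) = 1"
proof -
  have "killed_matrix i 0 = 1\<^sub>m m"
    unfolding killed_matrix_def by (rule eq_matI) auto
  then show ?thesis by simp
qed

lemma det_killed_matrix_1:
  assumes i: "i < m"
  shows "det (killed_matrix i 1) = gamma m p i"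
proof -
  have "det (killed_matrix i 1) = (\<Sum>b<m. killed_matrix i 1 $$ (i, b) * cofactor (killed_matrix i 1) i b)"
    by (rule laplace_expansion_row[OF killed_matrix_carrier i])
  also have "\<dots> = cofactor (killed_matrix i 1) i i"
    using i by (simp add: killed_matrix_def if_distrib[of "\<lambda>x. x * _"] cong: if_cong)
  also have "mat_delete (killed_matrix i 1) i i = mat_delete IC i i"
    unfolding mat_delete_def by (rule eq_matI) (auto simp: killed_matrix_def modm_matrix_def)
  then have "cofactor (killed_matrix i 1) i i = cofactor IC i i"
    unfolding cofactor_def by simp
  finally show ?thesis unfolding gamma_def .
qed

lemma continuous_det_killed_matrix: "continuous_on S (\<lambda>s. det (killed_matrix i s))"
proof -
  have "det (killed_matrix i s) = (\<Sum>\<pi> | \<pi> permutes {0..<m}. signof \<pi> *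
      (\<Prod>a = 0..<m. (if a = \<pi> a then 1 else 0) -
        s * (if a = i then 0 else modm_matrix m p $$ (a, \<pi> a))))" for s
    unfolding det_def'[OF killed_matrix_carrier]
  proof (intro sum.cong refl arg_cong2[where f = "(*)"] prod.cong)
    fix \<pi> a assume "\<pi> \<in> {\<pi>. \<pi> permutes {0..<m}}" "a \<in> {0..<m}"
    then have "\<pi> a < m" "a < m" by (auto dest: permutes_in_image)
    then show "killed_matrix i s $$ (a, \<pi> a) = (if a = \<pi> a then 1 else 0) -
        s * (if a = i then 0 else modm_matrix m p $$ (a, \<pi> a))"
      unfolding killed_matrix_def by simp
  qed
  then show ?thesis by (simp only:) (intro continuous_intros)
qed

lemma gamma_pos:
  assumes i: "i < m"
  shows "0 < gamma m p i"
proof (rule ccontr)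
  assume "\<not> 0 < gamma m p i"
  then have "det (killed_matrix i 1) \<le> 0 \<and> 0 \<le> det (killed_matrix i 0)"
    using det_killed_matrix_1[OF i] det_killed_matrix_0 by simp
  then obtain s where "0 \<le> s" "s \<le> 1" "det (killed_matrix i s) = 0"
    using IVT2'[of "\<lambda>s. det (killed_matrix i s)" 1 0 0] continuous_det_killed_matrix by auto
  then show False using det_killed_matrix_ne_0[OF i] by blast
qed

lemma gamma_sum_pos: "0 < (\<Sum>i<m. gamma m p i)"
  using m_pos gamma_pos by (intro sum_pos) (auto simp: lessThan_empty_iff)

lemma gamma_orthogonal_defect:
  assumes defect: "\<And>a. a < m \<Longrightarrow> v a - next_mean m p v a + t = w a"
    and orth: "(\<Sum>a<m. gamma m p a * w a) = 0"
  shows "t = 0"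
proof -
  have "(\<Sum>a<m. gamma m p a * w a) = (\<Sum>a<m. gamma m p a * (v a - next_mean m p v a + t))"
    using defect by (intro sum.cong refl) simp
  also have "\<dots> = t * (\<Sum>a<m. gamma m p a)"
    by (simp add: distrib_left right_diff_distrib sum.distrib sum_subtractf
        gamma_weighted_next_mean flip: sum_distrib_right)
  finally show ?thesis using orth gamma_sum_pos by simp
qed

text \<open>The rank-one perturbation \<open>(1 - C) + \<one> \<gamma>\<^sup>T\<close> of \<open>1 - C\<close>.  It is invertible because
  \<open>ker (1 - C)\<close> consists of the constants and \<open>\<gamma> \<cdot> \<one> > 0\<close>; a solution of \<open>N h = d - c\<close> solves
  \<open>(1 - C) h = d - c\<close> as soon as \<open>\<gamma> \<cdot> (d - c) = 0\<close>.\<close>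
definition poisson_matrix :: "real mat" where
  "poisson_matrix = mat m m (\<lambda>(a, b). IC $$ (a, b) + gamma m p b)"

lemma poisson_matrix_carrier: "poisson_matrix \<in> carrier_mat m m"
  unfolding poisson_matrix_def by simp

lemma poisson_matrix_row_sum:
  assumes a: "a < m"
  shows "(\<Sum>b<m. poisson_matrix $$ (a, b) * v b) =
    v a - next_mean m p v a + (\<Sum>b<m. gamma m p b * v b)"
  using a IC_row_sum[OF a, of v] unfolding poisson_matrix_def
  by (simp add: sum.distrib distrib_right)

lemma det_poisson_matrix_ne_0: "det poisson_matrix \<noteq> 0"
proof (rule det_ne_0_if_kernel_trivial[OF poisson_matrix_carrier])
  fix v a
  assume ker: "\<And>a. a < m \<Longrightarrow> (\<Sum>b<m. poisson_matrix $$ (a, b) * v b) = 0" and a: "a < m"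
  have row: "v a - next_mean m p v a + (\<Sum>b<m. gamma m p b * v b) = 0" if "a < m" for a
    using ker[OF that] poisson_matrix_row_sum[OF that, of v] by simp
  have orth: "(\<Sum>b<m. gamma m p b * v b) = 0"
    by (rule gamma_orthogonal_defect[where w = "\<lambda>_. 0", OF row]) simp_all
  have "next_mean m p v a = v a" if "a < m" for a
    using row[OF that] orth by linarith
  then have const: "v b = v 0" if "b < m" for b
    using that by (rule harmonic_imp_constant)
  have "(\<Sum>b<m. gamma m p b * v b) = (\<Sum>b<m. gamma m p b * v 0)"
    by (intro sum.cong refl) (metis const lessThan_iff)
  also have "\<dots> = (\<Sum>b<m. gamma m p b) * v 0" by (simp add: sum_distrib_right)
  finally have "v 0 = 0" using orth gamma_sum_pos by simp
  then show "v a = 0" using const[OF a] by simp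
qed

lemma poisson_solvable:
  "\<exists>h. \<forall>a<m. next_mean m p h a =
     h a - d a + (1 / (\<Sum>i<m. gamma m p i)) * (\<Sum>i<m. gamma m p i * d i)"
proof -
  define c where "c = (1 / (\<Sum>i<m. gamma m p i)) * (\<Sum>i<m. gamma m p i * d i)"
  obtain h where h: "\<And>a. a < m \<Longrightarrow> (\<Sum>b<m. poisson_matrix $$ (a, b) * h b) = d a - c"
    using solvable_if_det_ne_0[OF poisson_matrix_carrier det_poisson_matrix_ne_0, of "\<lambda>a. d a - c"]
    by blast
  have "(\<Sum>a<m. gamma m p a * (d a - c)) = (\<Sum>a<m. gamma m p a * d a) - c * (\<Sum>a<m. gamma m p a)"
    by (simp add: right_diff_distrib sum_subtractf sum_distrib_left mult.commute)
  then have "(\<Sum>a<m. gamma m p a * (d a - c)) = 0"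
    unfolding c_def using gamma_sum_pos by simp
  moreover have row: "h a - next_mean m p h a + (\<Sum>b<m. gamma m p b * h b) = d a - c"
    if "a < m" for a
    using h[OF that] poisson_matrix_row_sum[OF that, of h] by simp
  ultimately have "(\<Sum>b<m. gamma m p b * h b) = 0" by (intro gamma_orthogonal_defect[OF row])
  then have "next_mean m p h a = h a - d a + c" if "a < m" for a
    using row[OF that] by simp
  then show ?thesis unfolding c_def by blast
qed

end


lemma (in sigma_finite_subalgebra) integral_mult_eq_0_if_set_integrals_eq_0:
  fixes f g :: "'a \<Rightarrow> real"
  assumes f: "integrable M f" and zero: "\<And>A. A \<in> sets F \<Longrightarrow> (\<integral>x\<in>A. f x \<partial>M) = 0"
    and g: "g \<in> borel_measurable F" and gf: "integrable M (\<lambda>x. g x * f x)"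
  shows "(\<integral>x. g x * f x \<partial>M) = 0"
proof -
  have "AE x in M. real_cond_exp M F f x = 0"
    using zero f by (intro real_cond_exp_charact) (auto simp: set_lebesgue_integral_def)
  then have "(\<integral>x. g x * real_cond_exp M F f x \<partial>M) = (\<integral>x. 0 \<partial>M)"
    using measurable_from_subalg[OF subalg g] by (intro integral_cong_AE) auto
  then show ?thesis
    using real_cond_exp_intg(2)[OF gf g] f by simp
qed

lemma AE_summable_if_summable_integrals:
  fixes f :: "nat \<Rightarrow> 'a \<Rightarrow> real"
  assumes int: "\<And>n. integrable M (f n)" and nonneg: "\<And>n x. 0 \<le> f n x"
    and summable: "summable (\<lambda>n. \<integral>x. f n x \<partial>M)"
  shows "AE x in M. summable (\<lambda>n. f n x)"
proof -
  have "(\<integral>\<^sup>+x. (\<Sum>n. ennreal (f n x)) \<partial>M) = (\<Sum>n. \<integral>\<^sup>+x. ennreal (f n x) \<partial>M)"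
    using int by (intro nn_integral_suminf) auto
  also have "\<dots> = (\<Sum>n. ennreal (\<integral>x. f n x \<partial>M))"
    using int nonneg by (intro suminf_cong nn_integral_eq_integral) auto
  also have "\<dots> = ennreal (\<Sum>n. \<integral>x. f n x \<partial>M)"
    using summable nonneg by (intro suminf_ennreal2) (auto intro: integral_nonneg_AE)
  finally have "(\<integral>\<^sup>+x. (\<Sum>n. ennreal (f n x)) \<partial>M) \<noteq> \<infinity>" by simp
  then have "AE x in M. (\<Sum>n. ennreal (f n x)) \<noteq> \<infinity>"
    using int by (intro nn_integral_PInf_AE) auto
  then show ?thesis
    by eventually_elim (use nonneg in \<open>auto intro: summable_suminf_not_top\<close>)
qed

locale bounded_increments = prob_space +
  fixes D :: "nat \<Rightarrow> 'a \<Rightarrow> real" and B :: real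
  assumes D_measurable[measurable]: "\<And>n. D n \<in> borel_measurable M"
    and D_bounded: "AE x in M. \<forall>n. \<bar>D n x\<bar> \<le> B"
begin

lemma B_nonneg: "0 \<le> B"
proof -
  have "AE x in M. 0 \<le> B" using D_bounded by eventually_elim (use abs_ge_zero order_trans in blast)
  then show ?thesis by simp
qed

lemma partial_sum_bounded: "AE x in M. \<forall>n. \<bar>\<Sum>k<n. D k x\<bar> \<le> real n * B"
  using D_bounded
proof eventually_elim
  case (elim x)
  show ?case
  proof
    fix n
    have "\<bar>\<Sum>k<n. D k x\<bar> \<le> (\<Sum>k<n. \<bar>D k x\<bar>)" by (rule sum_abs)
    also have "\<dots> \<le> (\<Sum>k<n. B)" using elim by (intro sum_mono) auto
    finally show "\<bar>\<Sum>k<n. D k x\<bar> \<le> real n * B" by simp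
  qed
qed

lemma integrable_partial_sum_power_mult:
  "integrable M (\<lambda>x. (\<Sum>k<n. D k x) ^ i * D n x ^ j)"
proof (rule integrable_const_bound[where B = "(real n * B) ^ i * B ^ j"])
  show "AE x in M. norm ((\<Sum>k<n. D k x) ^ i * D n x ^ j) \<le> (real n * B) ^ i * B ^ j"
    using partial_sum_bounded D_bounded
  proof eventually_elim
    case (elim x)
    then show ?case
      unfolding real_norm_def abs_mult power_abs
      by (intro mult_mono power_mono) (auto simp: B_nonneg)
  qed
qed measurable

lemma integral_partial_sum_power_mult_le:
  "(\<integral>x. (\<Sum>k<n. D k x) ^ i * D n x ^ j \<partial>M) \<le> (real n * B) ^ i * B ^ j"
proof (rule integral_le_const[OF integrable_partial_sum_power_mult])
  show "AE x in M. (\<Sum>k<n. D k x) ^ i * D n x ^ j \<le> (real n * B) ^ i * B ^ j"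
    using partial_sum_bounded D_bounded
  proof eventually_elim
    case (elim x)
    have "(\<Sum>k<n. D k x) ^ i * D n x ^ j \<le> \<bar>\<Sum>k<n. D k x\<bar> ^ i * \<bar>D n x\<bar> ^ j"
      by (metis abs_ge_self abs_mult power_abs)
    also have "\<dots> \<le> (real n * B) ^ i * B ^ j"
      using elim by (intro mult_mono power_mono) (auto simp: B_nonneg)
    finally show ?case .
  qed
qed

lemma integral_partial_sum_Suc_power:
  "(\<integral>x. (\<Sum>k<Suc n. D k x) ^ q \<partial>M) =
    (\<Sum>i\<le>q. of_nat (q choose i) * (\<integral>x. (\<Sum>k<n. D k x) ^ (q - i) * D n x ^ i \<partial>M))"
proof -
  have "(\<Sum>k<Suc n. D k x) ^ q =
      (\<Sum>i\<le>q. of_nat (q choose i) * ((\<Sum>k<n. D k x) ^ (q - i) * D n x ^ i))" for x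
    using binomial_ring[of "D n x" "\<Sum>k<n. D k x" q] by (simp add: add.commute mult_ac)
  then show ?thesis
    by (simp add: Bochner_Integration.integral_sum integrable_partial_sum_power_mult)
qed

end

locale bounded_martingale_differences = bounded_increments +
  assumes D_orthogonal: "\<And>n j. (\<integral>x. (\<Sum>k<n. D k x) ^ j * D n x \<partial>M) = 0"
begin

lemma second_moment_le: "(\<integral>x. (\<Sum>k<n. D k x) ^ 2 \<partial>M) \<le> real n * B\<^sup>2"
proof (induction n)
  case 0
  then show ?case by simp
next
  case (Suc n)
  let ?I = "\<lambda>i j. \<integral>x. (\<Sum>k<n. D k x) ^ i * D n x ^ j \<partial>M"
  have "(\<integral>x. (\<Sum>k<Suc n. D k x) ^ 2 \<partial>M) = ?I 2 0 + 2 * ?I 1 1 + ?I 0 2"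
    by (simp only: integral_partial_sum_Suc_power) (simp add: numeral_2_eq_2)
  also have "?I 1 1 = 0" using D_orthogonal[of n 1] by simp
  also have "?I 0 2 \<le> B\<^sup>2"
    using integral_partial_sum_power_mult_le[of n 0 2] by simp
  finally show ?case using Suc.IH by (simp add: algebra_simps)
qed

lemma integral_partial_sum_sq_mult_sq_le:
  "(\<integral>x. (\<Sum>k<n. D k x) ^ 2 * D n x ^ 2 \<partial>M) \<le> real n * B ^ 4"
proof -
  have "(\<integral>x. (\<Sum>k<n. D k x) ^ 2 * D n x ^ 2 \<partial>M) \<le> (\<integral>x. B\<^sup>2 * (\<Sum>k<n. D k x) ^ 2 \<partial>M)"
  proof (rule integral_mono_AE[OF integrable_partial_sum_power_mult])
    show "integrable M (\<lambda>x. B\<^sup>2 * (\<Sum>k<n. D k x) ^ 2)"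
      using integrable_partial_sum_power_mult[of n 2 0] by simp
    show "AE x in M. (\<Sum>k<n. D k x) ^ 2 * D n x ^ 2 \<le> B\<^sup>2 * (\<Sum>k<n. D k x) ^ 2"
      using D_bounded
    proof eventually_elim
      case (elim x)
      then have "D n x ^ 2 \<le> B\<^sup>2" by (metis abs_le_square_iff abs_of_nonneg B_nonneg)
      then show ?case by (simp add: mult.commute mult_right_mono)
    qed
  qed
  also have "\<dots> \<le> B\<^sup>2 * (real n * B\<^sup>2)"
    using second_moment_le[of n] by (simp add: mult_left_mono)
  finally show ?thesis by (simp add: eval_nat_numeral algebra_simps)
qed

text \<open>Expanding \<open>(Y + D)\<^sup>4\<close>, the terms linear in the new increment \<open>D\<close> vanish by orthogonality,
  which leaves a quadratic rather than a quartic bound.\<close>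
lemma fourth_moment_le: "(\<integral>x. (\<Sum>k<n. D k x) ^ 4 \<partial>M) \<le> 10 * B ^ 4 * (real n)\<^sup>2"
proof (induction n)
  case 0
  then show ?case by simp
next
  case (Suc n)
  let ?Y = "\<lambda>x. \<Sum>k<n. D k x"
  let ?I = "\<lambda>i j. \<integral>x. ?Y x ^ i * D n x ^ j \<partial>M"
  have "(\<integral>x. (\<Sum>k<Suc n. D k x) ^ 4 \<partial>M) =
      ?I 4 0 + 4 * ?I 3 1 + 6 * ?I 2 2 + 4 * ?I 1 3 + ?I 0 4"
    by (simp only: integral_partial_sum_Suc_power) (simp add: eval_nat_numeral)
  also have "?I 3 1 = 0" using D_orthogonal[of n 3] by simp
  also have "?I 2 2 \<le> real n * B ^ 4" by (rule integral_partial_sum_sq_mult_sq_le)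
  also have "?I 1 3 \<le> real n * B ^ 4"
    using integral_partial_sum_power_mult_le[of n 1 3] by (simp add: eval_nat_numeral algebra_simps)
  also have "?I 0 4 \<le> B ^ 4"
    using integral_partial_sum_power_mult_le[of n 0 4] by simp
  finally have "(\<integral>x. (\<Sum>k<Suc n. D k x) ^ 4 \<partial>M) \<le> ?I 4 0 + 10 * (real n * B ^ 4) + B ^ 4"
    by simp
  moreover have "?I 4 0 \<le> 10 * B ^ 4 * (real n)\<^sup>2" using Suc.IH by simp
  moreover have "10 * B ^ 4 * (real (Suc n))\<^sup>2 =
      10 * B ^ 4 * (real n)\<^sup>2 + 20 * (real n * B ^ 4) + 10 * B ^ 4"
    by (simp add: algebra_simps power2_eq_square)
  moreover have "0 \<le> real n * B ^ 4" "0 \<le> B ^ 4" using B_nonneg by simp_all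
  ultimately show ?case by linarith
qed

text \<open>The fourth-moment proof of the strong law: \<open>E((Y\<^sub>n / n)\<^sup>4) = O(n\<^sup>-\<^sup>2)\<close> is summable.\<close>
theorem strong_law: "AE x in M. (\<lambda>n. (\<Sum>k<n. D k x) / real n) \<longlonglongrightarrow> 0"
proof -
  let ?Z = "\<lambda>n x. ((\<Sum>k<n. D k x) / real n) ^ 4"
  have "(\<integral>x. ?Z n x \<partial>M) \<le> 10 * B ^ 4 * inverse ((real n)\<^sup>2)" for n
  proof (cases "n = 0")
    case False
    have "(\<integral>x. ?Z n x \<partial>M) = (\<integral>x. (\<Sum>k<n. D k x) ^ 4 \<partial>M) / real n ^ 4"
      by (simp add: power_divide)
    also have "\<dots> \<le> 10 * B ^ 4 * (real n)\<^sup>2 / real n ^ 4"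
      by (intro divide_right_mono fourth_moment_le) simp
    also have "\<dots> = 10 * B ^ 4 * inverse ((real n)\<^sup>2)"
      using False by (simp add: field_simps eval_nat_numeral)
    finally show ?thesis .
  qed simp
  moreover have "0 \<le> (\<integral>x. ?Z n x \<partial>M)" for n
    by (simp add: zero_le_even_power)
  ultimately have "summable (\<lambda>n. \<integral>x. ?Z n x \<partial>M)"
    by (intro summable_comparison_test'[OF summable_mult[OF inverse_power_summable]]) auto
  moreover have "integrable M (?Z n)" for n
    using integrable_partial_sum_power_mult[of n 4 0] by (simp add: power_divide)
  ultimately have "AE x in M. summable (\<lambda>n. ?Z n x)"
    by (intro AE_summable_if_summable_integrals) (auto simp: zero_le_even_power)
  then show ?thesis
  proof eventually_elim
    case (elim x)
    have "(\<lambda>n. \<bar>root 4 (?Z n x)\<bar>) \<longlonglongrightarrow> \<bar>root 4 0\<bar>"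
      by (intro tendsto_rabs tendsto_real_root summable_LIMSEQ_zero elim)
    then have "(\<lambda>n. \<bar>(\<Sum>k<n. D k x) / real n\<bar>) \<longlonglongrightarrow> 0"
      by (simp only: root_abs_power zero_less_numeral real_root_zero abs_zero)
    then show ?case by (rule tendsto_rabs_zero_cancel)
  qed
qed

end

lemma nat_mod_add_of_nat:
  fixes x :: int
  assumes "0 < m"
  shows "nat ((x + int k) mod int m) = (nat (x mod int m) + k) mod m"
proof -
  obtain r where r: "x mod int m = int r" using assms by (metis pos_mod_sign of_nat_0_less_iff nonneg_int_cases)
  have "(x + int k) mod int m = (int r + int k) mod int m" by (simp add: mod_simps flip: r)
  also have "\<dots> = int ((r + k) mod m)" by (simp add: of_nat_mod)
  finally show ?thesis using r by simp
qed

lemma nat_mod_add_1: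
  fixes x :: int
  assumes "0 < m"
  shows "nat ((x + 1) mod int m) = (nat (x mod int m) + 1) mod m"
  using nat_mod_add_of_nat[OF assms, of x 1] by simp

lemma nat_mod_diff_1:
  fixes x :: int
  assumes "0 < m"
  shows "nat ((x - 1) mod int m) = (nat (x mod int m) + m - 1) mod m"
proof -
  have "x + int (m - 1) = (x - 1) + int m" using assms by (simp add: of_nat_diff)
  then have "(x + int (m - 1)) mod int m = (x - 1) mod int m"
    by (simp only: mod_add_self2)
  then show ?thesis using nat_mod_add_of_nat[OF assms, of x "m - 1"] assms by simp
qed

locale modm_walk = cyclic_chain m p for m p +
  fixes M :: "'a measure" and S :: "nat \<Rightarrow> 'a \<Rightarrow> int"
  assumes walk: "mod_walk M m p S"
begin

sublocale prob_space M
  using walk unfolding mod_walk_def by simp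

lemma S_measurable[measurable]: "S n \<in> measurable M (count_space UNIV)"
  using walk unfolding mod_walk_def by simp

lemma AE_unit_steps: "AE \<omega> in M. \<forall>n. S (Suc n) \<omega> - S n \<omega> \<in> {-1, 1}"
  using walk unfolding mod_walk_def by (simp add: AE_all_countable)

lemma measure_cylinder_step_up:
  "measure M {\<omega> \<in> space M. (\<forall>k\<le>n. S k \<omega> = s k) \<and> S (Suc n) \<omega> = s n + 1} =
    p (nat (s n mod int m)) * measure M {\<omega> \<in> space M. \<forall>k\<le>n. S k \<omega> = s k}"
  using walk unfolding mod_walk_def by blast

lemma measure_cylinder_step_down:
  "measure M {\<omega> \<in> space M. (\<forall>k\<le>n. S k \<omega> = s k) \<and> S (Suc n) \<omega> = s n + (- 1)} =
    (1 - p (nat (s n mod int m))) * measure M {\<omega> \<in> space M. \<forall>k\<le>n. S k \<omega> = s k}"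
  using walk unfolding mod_walk_def by simp

lemma sets_cylinder: "{\<omega> \<in> space M. \<forall>k\<le>n. S k \<omega> = s k} \<in> sets M"
proof -
  have "{\<omega> \<in> space M. \<forall>k\<le>n. S k \<omega> = s k} = (\<Inter>k\<in>{..n}. S k -` {s k} \<inter> space M)"
    by auto
  also have "\<dots> \<in> sets M" by (intro sets.finite_INT) auto
  finally show ?thesis .
qed

definition history :: "nat \<Rightarrow> 'a \<Rightarrow> int list" where
  "history n \<omega> = map (\<lambda>k. S k \<omega>) [0..<Suc n]"

lemma history_nth: "k \<le> n \<Longrightarrow> history n \<omega> ! k = S k \<omega>"
  unfolding history_def by (simp del: upt_Suc add: nth_map)

lemma length_history[simp]: "length (history n \<omega>) = Suc n"
  unfolding history_def by simp

lemma history_eq_iff: "length l = Suc n \<Longrightarrow> history n \<omega> = l \<longleftrightarrow> (\<forall>k\<le>n. S k \<omega> = l ! k)"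
  by (auto simp: list_eq_iff_nth_eq history_nth less_Suc_eq_le)

lemma measurable_history[measurable]: "history n \<in> measurable M (count_space UNIV)"
proof (subst measurable_count_space_eq2_countable, intro conjI ballI)
  fix l :: "int list"
  have "history n -` {l} \<inter> space M =
      (if length l = Suc n then {\<omega> \<in> space M. \<forall>k\<le>n. S k \<omega> = l ! k} else {})"
    using history_eq_iff[of l n] by auto
  then show "history n -` {l} \<inter> space M \<in> sets M" using sets_cylinder by simp
qed auto

definition history_algebra :: "nat \<Rightarrow> 'a measure" where
  "history_algebra n = vimage_algebra (space M) (history n) (count_space UNIV)"

lemma subalgebra_history_algebra: "subalgebra M (history_algebra n)"
  unfolding subalgebra_def history_algebra_def
  using sets_image_in_sets[OF refl measurable_history] by (simp add: space_vimage_algebra)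

lemma sets_history_algebraE:
  assumes "A \<in> sets (history_algebra n)"
  obtains H where "A = history n -` H \<inter> space M"
  using assms unfolding history_algebra_def by (subst (asm) sets_vimage_algebra2) auto

lemma history_comp_measurable: "(\<lambda>\<omega>. f (history n \<omega>)) \<in> borel_measurable (history_algebra n)"
  unfolding history_algebra_def
  by (rule measurable_compose[OF measurable_vimage_algebra1]) simp_all

definition residue_event :: "nat \<Rightarrow> nat \<Rightarrow> 'a set" where
  "residue_event n r = {\<omega> \<in> space M. nat (S n \<omega> mod int m) = r}"

definition step_event :: "nat \<Rightarrow> int \<Rightarrow> 'a set" where
  "step_event n \<sigma> = {\<omega> \<in> space M. S (Suc n) \<omega> = S n \<omega> + \<sigma>}"

lemma sets_residue_event[measurable]: "residue_event n r \<in> sets M"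
proof -
  have "residue_event n r = S n -` {x. nat (x mod int m) = r} \<inter> space M"
    unfolding residue_event_def by auto
  then show ?thesis by simp
qed

lemma sets_step_event[measurable]: "step_event n \<sigma> \<in> sets M"
proof -
  have "step_event n \<sigma> = (\<lambda>\<omega>. S (Suc n) \<omega> - S n \<omega>) -` {\<sigma>} \<inter> space M"
    unfolding step_event_def by auto
  then show ?thesis by simp
qed

text \<open>The Markov property of \<open>mod_walk\<close>, lifted from cylinders to all past events: split
  \<open>A \<inter> residue_event n r\<close> into the countably many cylinders of histories ending in residue \<open>r\<close>.\<close>
lemma measure_step_event:
  assumes A: "A \<in> sets (history_algebra n)" and nonneg: "0 \<le> q r"
    and cyl: "\<And>s. measure M {\<omega> \<in> space M. (\<forall>k\<le>n. S k \<omega> = s k) \<and> S (Suc n) \<omega> = s n + \<sigma>} =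
      q (nat (s n mod int m)) * measure M {\<omega> \<in> space M. \<forall>k\<le>n. S k \<omega> = s k}"
  shows "measure M (A \<inter> residue_event n r \<inter> step_event n \<sigma>) = q r * measure M (A \<inter> residue_event n r)"
proof -
  obtain H where H: "A = history n -` H \<inter> space M" using A by (rule sets_history_algebraE)
  define L where "L = {l \<in> H. length l = Suc n \<and> nat (l ! n mod int m) = r}"
  define C where "C l = {\<omega> \<in> space M. \<forall>k\<le>n. S k \<omega> = l ! k}" for l
  have in_C: "\<omega> \<in> C l \<longleftrightarrow> \<omega> \<in> space M \<and> history n \<omega> = l" if "l \<in> L" for l \<omega>
    using that history_eq_iff[of l n \<omega>] unfolding C_def L_def by auto
  have union: "A \<inter> residue_event n r = (\<Union>l\<in>L. C l)"
    using in_C by (auto simp: H L_def residue_event_def history_nth)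
  have union_step: "A \<inter> residue_event n r \<inter> step_event n \<sigma> = (\<Union>l\<in>L. C l \<inter> step_event n \<sigma>)"
    using in_C by (auto simp: H L_def residue_event_def step_event_def history_nth)
  have disj: "disjoint_family_on C L" and disj_step: "disjoint_family_on (\<lambda>l. C l \<inter> step_event n \<sigma>) L"
    unfolding disjoint_family_on_def by (auto simp: in_C)
  have sets_C: "C l \<in> sets M" for l unfolding C_def by (rule sets_cylinder)
  have step: "measure M (C l \<inter> step_event n \<sigma>) = q r * measure M (C l)" if "l \<in> L" for l
  proof -
    have "C l \<inter> step_event n \<sigma> =
        {\<omega> \<in> space M. (\<forall>k\<le>n. S k \<omega> = l ! k) \<and> S (Suc n) \<omega> = l ! n + \<sigma>}"
      unfolding C_def step_event_def by auto
    then show ?thesis using cyl[of "nth l"] that unfolding C_def L_def by simp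
  qed
  have "emeasure M (A \<inter> residue_event n r \<inter> step_event n \<sigma>) =
      (\<integral>\<^sup>+l. emeasure M (C l \<inter> step_event n \<sigma>) \<partial>count_space L)"
    unfolding union_step using sets_C by (intro emeasure_UN_countable disj_step) auto
  also have "\<dots> = (\<integral>\<^sup>+l. ennreal (q r) * emeasure M (C l) \<partial>count_space L)"
    using step nonneg by (intro nn_integral_cong) (auto simp: emeasure_eq_measure ennreal_mult)
  also have "\<dots> = ennreal (q r) * emeasure M (A \<inter> residue_event n r)"
    unfolding union by (simp add: nn_integral_cmult emeasure_UN_countable[OF sets_C _ disj])
  finally show ?thesis
    using nonneg by (simp add: emeasure_eq_measure ennreal_mult[symmetric] measure_nonneg)
qed

lemma measure_step_up:
  "A \<in> sets (history_algebra n) \<Longrightarrow> r < m \<Longrightarrow>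
    measure M (A \<inter> residue_event n r \<inter> step_event n 1) = p r * measure M (A \<inter> residue_event n r)"
  using p_bounds[of r] measure_cylinder_step_up by (intro measure_step_event) auto

lemma measure_step_down:
  "A \<in> sets (history_algebra n) \<Longrightarrow> r < m \<Longrightarrow>
    measure M (A \<inter> residue_event n r \<inter> step_event n (- 1)) =
      (1 - p r) * measure M (A \<inter> residue_event n r)"
  using p_bounds[of r] measure_cylinder_step_down by (intro measure_step_event) auto

end

locale modm_walk_poisson = modm_walk +
  fixes h :: "nat \<Rightarrow> real" and c :: real
  assumes poisson: "\<And>a. a < m \<Longrightarrow> next_mean m p h a = h a - (p a - (1 - p a)) + c"
begin

text \<open>\<open>phi\<close> corrects the position by the solution of the Poisson equation, so that
  \<open>phi (S\<^sub>n) - n c\<close> is a martingale.\<close>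
definition phi :: "int \<Rightarrow> real" where
  "phi x = real_of_int x + h (nat (x mod int m))"

definition incr :: "nat \<Rightarrow> 'a \<Rightarrow> real" where
  "incr n \<omega> = phi (S (Suc n) \<omega>) - phi (S n \<omega>) - c"

definition incr_up :: "nat \<Rightarrow> real" where
  "incr_up r = 1 + h ((r + 1) mod m) - h r - c"

definition incr_down :: "nat \<Rightarrow> real" where
  "incr_down r = - 1 + h ((r + m - 1) mod m) - h r - c"

definition incr_bound :: real where
  "incr_bound = 1 + 2 * (\<Sum>a<m. \<bar>h a\<bar>) + \<bar>c\<bar>"

lemma mean_incr_eq_0: "r < m \<Longrightarrow> p r * incr_up r + (1 - p r) * incr_down r = 0"
  using poisson[of r] unfolding incr_up_def incr_down_def next_mean_def by (simp add: algebra_simps)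

lemma abs_h_residue_le: "\<bar>h (nat (x mod int m))\<bar> \<le> (\<Sum>a<m. \<bar>h a\<bar>)"
  using m_pos by (intro member_le_sum) (auto simp: nat_less_iff)

lemma measurable_incr[measurable]: "incr n \<in> borel_measurable M"
  unfolding incr_def by measurable

lemma incr_bounded: "AE \<omega> in M. \<forall>n. \<bar>incr n \<omega>\<bar> \<le> incr_bound"
  using AE_unit_steps
proof eventually_elim
  case (elim \<omega>)
  show ?case
  proof
    fix n
    have "\<bar>incr n \<omega>\<bar> \<le> \<bar>real_of_int (S (Suc n) \<omega> - S n \<omega>)\<bar> +
        \<bar>h (nat (S (Suc n) \<omega> mod int m))\<bar> + \<bar>h (nat (S n \<omega> mod int m))\<bar> + \<bar>c\<bar>"
      unfolding incr_def phi_def by linarith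
    moreover have "\<bar>real_of_int (S (Suc n) \<omega> - S n \<omega>)\<bar> = 1"
      using elim[THEN spec, of n] by (auto simp del: of_int_diff)
    ultimately show "\<bar>incr n \<omega>\<bar> \<le> incr_bound"
      using abs_h_residue_le[of "S (Suc n) \<omega>"] abs_h_residue_le[of "S n \<omega>"]
      unfolding incr_bound_def by linarith
  qed
qed

lemma incr_eq_sum_indicator:
  assumes \<omega>: "\<omega> \<in> space M" and unit: "S (Suc n) \<omega> - S n \<omega> \<in> {-1, 1}"
  shows "incr n \<omega> = (\<Sum>r<m. indicator (residue_event n r \<inter> step_event n 1) \<omega> * incr_up r +
    indicator (residue_event n r \<inter> step_event n (- 1)) \<omega> * incr_down r)"
proof -
  define r0 where "r0 = nat (S n \<omega> mod int m)"
  have r0: "r0 < m" unfolding r0_def using m_pos by (simp add: nat_less_iff)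
  have "(\<Sum>r<m. indicator (residue_event n r \<inter> step_event n 1) \<omega> * incr_up r +
      indicator (residue_event n r \<inter> step_event n (- 1)) \<omega> * incr_down r) =
      (\<Sum>r<m. if r = r0 then indicator (step_event n 1) \<omega> * incr_up r +
        indicator (step_event n (- 1)) \<omega> * incr_down r else 0)"
    using \<omega> by (intro sum.cong refl) (auto simp: residue_event_def r0_def indicator_def)
  also have "\<dots> = indicator (step_event n 1) \<omega> * incr_up r0 + indicator (step_event n (- 1)) \<omega> * incr_down r0"
    using r0 by simp
  also have "\<dots> = incr n \<omega>"
    using unit m_pos \<omega>
    by (auto simp: step_event_def indicator_def incr_def phi_def incr_up_def incr_down_def r0_def
        nat_mod_add_1 nat_mod_diff_1)
  finally show ?thesis by simp
qed

lemma set_integral_incr_eq_sum: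
  assumes A: "A \<in> sets M"
  shows "(\<integral>\<omega>\<in>A. incr n \<omega> \<partial>M) =
    (\<Sum>r<m. measure M (A \<inter> residue_event n r \<inter> step_event n 1) * incr_up r +
      measure M (A \<inter> residue_event n r \<inter> step_event n (- 1)) * incr_down r)"
    (is "_ = (\<Sum>r<m. measure M (?E r 1) * _ + measure M (?E r (- 1)) * _)")
proof -
  define E where "E = ?E"
  have sets_E: "E r \<sigma> \<in> sets M" for r \<sigma> using A unfolding E_def by simp
  have integrable_E: "integrable M (\<lambda>\<omega>. indicator (E r \<sigma>) \<omega> * k)" for r \<sigma> and k :: real
    using sets_E by (intro integrable_mult_left integrable_real_indicator) (auto simp: emeasure_eq_measure)
  have "(\<integral>\<omega>\<in>A. incr n \<omega> \<partial>M) =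
      (\<integral>\<omega>. (\<Sum>r<m. indicator (E r 1) \<omega> * incr_up r + indicator (E r (- 1)) \<omega> * incr_down r) \<partial>M)"
    unfolding set_lebesgue_integral_def
  proof (rule integral_cong_AE)
    show "AE \<omega> in M. indicator A \<omega> *\<^sub>R incr n \<omega> =
        (\<Sum>r<m. indicator (E r 1) \<omega> * incr_up r + indicator (E r (- 1)) \<omega> * incr_down r)"
      using AE_unit_steps AE_space
      by eventually_elim
        (simp add: E_def incr_eq_sum_indicator sum_distrib_left indicator_inter_arith algebra_simps)
  qed (use A sets_E in measurable)
  also have "\<dots> = (\<Sum>r<m. (\<integral>\<omega>. indicator (E r 1) \<omega> * incr_up r \<partial>M) +
      (\<integral>\<omega>. indicator (E r (- 1)) \<omega> * incr_down r \<partial>M))"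
    using integrable_E by (simp add: Bochner_Integration.integral_sum Bochner_Integration.integral_add)
  also have "\<dots> = (\<Sum>r<m. measure M (E r 1) * incr_up r + measure M (E r (- 1)) * incr_down r)"
    using sets.Int_space_eq2[OF sets_E] by simp
  finally show ?thesis unfolding E_def .
qed

lemma set_integral_incr:
  assumes A: "A \<in> sets (history_algebra n)"
  shows "(\<integral>\<omega>\<in>A. incr n \<omega> \<partial>M) = 0"
proof -
  have "A \<in> sets M" using subalgebra_history_algebra A unfolding subalgebra_def by auto
  then have "(\<integral>\<omega>\<in>A. incr n \<omega> \<partial>M) =
      (\<Sum>r<m. measure M (A \<inter> residue_event n r \<inter> step_event n 1) * incr_up r +
        measure M (A \<inter> residue_event n r \<inter> step_event n (- 1)) * incr_down r)"
    by (rule set_integral_incr_eq_sum)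
  also have "\<dots> =
      (\<Sum>r<m. measure M (A \<inter> residue_event n r) * (p r * incr_up r + (1 - p r) * incr_down r))"
    by (intro sum.cong refl) (simp add: measure_step_up[OF A] measure_step_down[OF A] algebra_simps)
  also have "\<dots> = 0" by (simp add: mean_incr_eq_0)
  finally show ?thesis .
qed

lemma sum_incr: "(\<Sum>k<n. incr k \<omega>) = phi (S n \<omega>) - phi (S 0 \<omega>) - real n * c"
  by (induction n) (simp_all add: incr_def algebra_simps)

sublocale bounded_increments M incr incr_bound
  using incr_bounded by unfold_locales auto

lemma incr_orthogonal: "(\<integral>\<omega>. (\<Sum>k<n. incr k \<omega>) ^ j * incr n \<omega> \<partial>M) = 0"
proof -
  interpret past: finite_measure_subalgebra M "history_algebra n"
    using subalgebra_history_algebra by unfold_locales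
  have past_function: "(\<lambda>\<omega>. (\<Sum>k<n. incr k \<omega>) ^ j) =
      (\<lambda>\<omega>. (\<lambda>l. (phi (l ! n) - phi (l ! 0) - real n * c) ^ j) (history n \<omega>))"
    by (simp add: sum_incr history_nth)
  have "(\<lambda>\<omega>. (\<Sum>k<n. incr k \<omega>) ^ j) \<in> borel_measurable (history_algebra n)"
    unfolding past_function by (rule history_comp_measurable)
  moreover have "integrable M (incr n)"
    using integrable_partial_sum_power_mult[of n 0 1] by simp
  moreover have "integrable M (\<lambda>\<omega>. (\<Sum>k<n. incr k \<omega>) ^ j * incr n \<omega>)"
    using integrable_partial_sum_power_mult[of n j 1] by simp
  ultimately show ?thesis
    using set_integral_incr by (intro past.integral_mult_eq_0_if_set_integrals_eq_0)
qed

sublocale bounded_martingale_differences M incr incr_bound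
  by unfold_locales (rule incr_orthogonal)

theorem strong_law_walk: "AE \<omega> in M. (\<lambda>n. real_of_int (S n \<omega>) / real n) \<longlonglongrightarrow> c"
  using strong_law
proof eventually_elim
  case (elim \<omega>)
  define K where "K = \<bar>phi (S 0 \<omega>)\<bar> + (\<Sum>a<m. \<bar>h a\<bar>)"
  have "(\<lambda>n. (phi (S 0 \<omega>) - h (nat (S n \<omega> mod int m))) / real n) \<longlonglongrightarrow> 0"
  proof (rule Lim_null_comparison)
    have "\<bar>phi (S 0 \<omega>) - h (nat (S n \<omega> mod int m))\<bar> \<le> K" for n
      unfolding K_def using abs_h_residue_le[of "S n \<omega>"] by linarith
    then show "\<forall>\<^sub>F n in sequentially.
        norm ((phi (S 0 \<omega>) - h (nat (S n \<omega> mod int m))) / real n) \<le> K * inverse (real n)"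
      by (intro always_eventually allI) (simp add: divide_inverse abs_mult mult_right_mono)
    show "(\<lambda>n. K * inverse (real n)) \<longlonglongrightarrow> 0"
      using tendsto_mult_right_zero[OF lim_inverse_n', of K] by (simp add: divide_inverse)
  qed
  with elim have "(\<lambda>n. (\<Sum>k<n. incr k \<omega>) / real n +
      (phi (S 0 \<omega>) - h (nat (S n \<omega> mod int m))) / real n + c) \<longlonglongrightarrow> 0 + 0 + c"
    by (intro tendsto_add tendsto_const)
  then have "(\<lambda>n. (\<Sum>k<n. incr k \<omega>) / real n +
      (phi (S 0 \<omega>) - h (nat (S n \<omega> mod int m))) / real n + c) \<longlonglongrightarrow> c"
    by simp
  moreover have "\<forall>\<^sub>F n in sequentially. (\<Sum>k<n. incr k \<omega>) / real n +
      (phi (S 0 \<omega>) - h (nat (S n \<omega> mod int m))) / real n + c = real_of_int (S n \<omega>) / real n"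
    by (rule eventually_sequentiallyI[of 1]) (simp add: sum_incr phi_def field_simps)
  ultimately show ?case by (rule Lim_transform_eventually)
qed

end

theorem theorem5p1:
  fixes M :: "'a measure" and m :: nat and p :: "nat \<Rightarrow> real" and S :: "nat \<Rightarrow> 'a \<Rightarrow> int"
  assumes "m \<ge> 1"
    and "\<And>j. j < m \<Longrightarrow> 0 < p j \<and> p j < 1"
    and "mod_walk M m p S"
  shows "AE \<omega> in M. (\<lambda>n. real_of_int (S n \<omega>) / real n) \<longlonglongrightarrow>
           (1 / (\<Sum>i<m. gamma m p i)) * (\<Sum>i<m. gamma m p i * (p i - (1 - p i)))"
proof -
  interpret chain: cyclic_chain m p
    using assms(1,2) by unfold_locales auto
  define c where "c = (1 / (\<Sum>i<m. gamma m p i)) * (\<Sum>i<m. gamma m p i * (p i - (1 - p i)))"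
  obtain h where "\<forall>a<m. next_mean m p h a = h a - (p a - (1 - p a)) + c"
    using chain.poisson_solvable[of "\<lambda>i. p i - (1 - p i)"] unfolding c_def by blast
  then interpret walk: modm_walk_poisson m p M S h c
    using assms by unfold_locales blast+
  show ?thesis
    using walk.strong_law_walk unfolding c_def .
qed

end
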